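(* Let $K\ge 1$ be an integer, let $\Pi_1,\dots,\Pi_K$ be arbitrary probability distributions on $\mathcal{X}^1\times\mathcal{Y}$, let $(q_1,\dots,q_K)$ be a probability vector, let $\alpha\in(0,1)$, and let $n_1,\dots,n_K\ge 0$ be fixed (nonrandom) integers with $n=n_1+\dots+n_K$. Suppose the calibration data $(X_1,Y_1),\dots,(X_n,Y_n)$, with $X_i=(X_i^0,X_i^1)$, are generated independently as follows: for each $k\in[K]$ and each index $i\in\{n_1+\dots+n_{k-1}+1,\dots,n_1+\dots+n_k\}$, $X_i^0=k$ and $(X_i^1,Y_i)\sim\Pi_k$. Suppose the test point $(X_{n+1},Y_{n+1})$, $X_{n+1}=(X^0_{n+1},X^1_{n+1})$, is drawn independently of the calibration data from the distribution $Q$ given by $X^0_{n+1}\sim\textnormal{Multinomial}(q_1,\dots,q_K)$ (i.e. $\mathbb{P}\{X^0_{n+1}=k\}=q_k$) and $(X^1_{n+1},Y_{n+1})\mid X^0_{n+1}=k\ \sim\ \Pi_k$. Let $s:\mathcal{X}\times\mathcal{Y}\to\mathbb{R}$ be any fixed measurable score function, and let $\widehat{C}_n$ be the GWCP prediction set defined in the context. Then \[\mathbb{P}\left\{Y_{n+1}\in\widehat{C}_n(X_{n+1})\right\}\ \ge\ 1-\alpha-\max_{k:\,n_k>0}\{q_k/n_k\}.\]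
   Context: Features are $x=(x^0,x^1)\in\mathcal{X}=[K]\times\mathcal{X}^1$, where $x^0\in[K]=\{1,\dots,K\}$ is the group label. For a probability distribution $\mu$ on $\mathbb{R}\cup\{+\infty\}$ and $\tau\in(0,1]$, $\textnormal{Quantile}_{\tau}(\mu)=\inf\{t\in\mathbb{R}\cup\{+\infty\}:\mu([-\infty,t])\ge\tau\}$; $\delta_s$ denotes the point mass at $s$. Given calibration data, set $s_i=s(X_i,Y_i)$, $n_k=\sum_{i\le n}\mathbf{1}\{X_i^0=k\}$, and $\widehat{P}^{(k)}_{\textnormal{score}}=\frac{1}{n_k}\sum_{i\le n:\,X_i^0=k}\delta_{s_i}$ if $n_k>0$, while $\widehat{P}^{(k)}_{\textnormal{score}}=\delta_{+\infty}$ if $n_k=0$. The group-weighted conformal prediction (GWCP) set is $\widehat{C}_n(x)=\{y\in\mathcal{Y}: s(x,y)\le\widehat{q}\}$ with $\widehat{q}=\textnormal{Quantile}_{1-\alpha}\big(\sum_{k=1}^K q_k\widehat{P}^{(k)}_{\textnormal{score}}\big)$. *)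

theory Defs
  imports "HOL-Probability.Probability"
begin

definition emp_score :: "ereal list \<Rightarrow> ereal pmf" where
  "emp_score xs = (if xs = [] then return_pmf \<infinity> else pmf_of_multiset (mset xs))"

definition quantile :: "real \<Rightarrow> (ereal set \<Rightarrow> real) \<Rightarrow> ereal" where
  "quantile \<tau> \<mu> = Inf {t. t \<noteq> -\<infinity> \<and> \<mu> {..t} \<ge> \<tau>}"

definition group_scores ::
  "(nat \<times> 'x \<Rightarrow> 'y \<Rightarrow> real) \<Rightarrow> (nat \<times> 'x \<times> 'y) list \<Rightarrow> nat \<Rightarrow> ereal list" where
  "group_scores s data k = [ereal (s (k', x) y). (k', x, y) \<leftarrow> data, k' = k]"

definition gwcp_qhat ::
  "(nat \<times> 'x \<Rightarrow> 'y \<Rightarrow> real) \<Rightarrow> nat \<Rightarrow> (nat \<Rightarrow> real) \<Rightarrow> real \<Rightarrow> (nat \<times> 'x \<times> 'y) list \<Rightarrow> ereal" where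
  "gwcp_qhat s K q \<alpha> data =
     quantile (1 - \<alpha>)
       (\<lambda>A. \<Sum>k\<in>{1..K}. q k * measure_pmf.prob (emp_score (group_scores s data k)) A)"

definition gwcp_set ::
  "(nat \<times> 'x \<Rightarrow> 'y \<Rightarrow> real) \<Rightarrow> nat \<Rightarrow> (nat \<Rightarrow> real) \<Rightarrow> real \<Rightarrow> (nat \<times> 'x \<times> 'y) list
     \<Rightarrow> nat \<times> 'x \<Rightarrow> 'y set" where
  "gwcp_set s K q \<alpha> data x = {y. ereal (s x y) \<le> gwcp_qhat s K q \<alpha> data}"

end

(*
  Fix the calibration scores c and let F_c = sum_k q_k P_k be the mixture of the group-wise
  empirical score distributions, whose (1 - alpha)-quantile is the GWCP threshold.  Replacing one
  score of a group k with n_k > 0 moves F_c by at most q_k / n_k <= m, so the threshold computed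
  after such a replacement is at least the (1 - alpha - m)-quantile T of F_c.

  Given that the test point comes from group k, its score is exchangeable with every calibration
  score of group k.  Hence the conditional coverage probability is the average, over the members
  j of group k, of the probability that the j-th score lies below the threshold computed with the
  j-th score replaced by the test score; by the first paragraph this is at least the fraction of
  group-k scores below T.  For an empty group, T = infinity forces the threshold to be infinite.
  Weighting with q_k, the coverage probability is at least F_c(T) >= 1 - alpha - m.
*)

theory Submission
  imports Defs
begin

section \<open>Quantiles of step distribution functions\<close>

definition cdf_quantile :: "real \<Rightarrow> (ereal \<Rightarrow> real) \<Rightarrow> ereal" where
  "cdf_quantile \<beta> F = Inf {t. t \<noteq> -\<infinity> \<and> \<beta> \<le> F t}"

lemma quantile_eq_cdf_quantile: "quantile \<tau> \<mu> = cdf_quantile \<tau> (\<lambda>t. \<mu> {..t})"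
  unfolding quantile_def cdf_quantile_def ..

lemma cdf_quantile_le: "t \<noteq> -\<infinity> \<Longrightarrow> \<beta> \<le> F t \<Longrightarrow> cdf_quantile \<beta> F \<le> t"
  unfolding cdf_quantile_def by (rule Inf_lower) simp

lemma cdf_quantile_mono:
  assumes "\<And>t. \<beta>' \<le> F' t \<Longrightarrow> \<beta> \<le> F t"
  shows "cdf_quantile \<beta> F \<le> cdf_quantile \<beta>' F'"
  unfolding cdf_quantile_def using assms by (intro Inf_superset_mono) auto

text \<open>In the next two lemmas, \<open>step\<close> says that \<open>F\<close> is a step function jumping only at
  points of \<open>P \<union> {\<infinity>}\<close>.\<close>

lemma le_cdf_quantile_iff:
  assumes step: "\<And>t. 0 < F t \<Longrightarrow> \<exists>p\<in>insert \<infinity> P. p \<le> t \<and> F p = F t"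
    and P: "-\<infinity> \<notin> P" and \<beta>: "0 < \<beta>"
  shows "z \<le> cdf_quantile \<beta> F \<longleftrightarrow> (\<forall>p\<in>P. p < z \<longrightarrow> F p < \<beta>)"
proof
  assume z: "z \<le> cdf_quantile \<beta> F"
  show "\<forall>p\<in>P. p < z \<longrightarrow> F p < \<beta>"
  proof (intro ballI impI)
    fix p assume "p \<in> P" "p < z"
    show "F p < \<beta>"
    proof (rule ccontr)
      assume "\<not> F p < \<beta>"
      then have "cdf_quantile \<beta> F \<le> p" using P \<open>p \<in> P\<close> by (intro cdf_quantile_le) auto
      with z \<open>p < z\<close> show False by simp
    qed
  qed
next
  assume below: "\<forall>p\<in>P. p < z \<longrightarrow> F p < \<beta>"
  show "z \<le> cdf_quantile \<beta> F"
    unfolding cdf_quantile_def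
  proof (rule Inf_greatest, rule ccontr)
    fix t assume "t \<in> {t. t \<noteq> -\<infinity> \<and> \<beta> \<le> F t}" and "\<not> z \<le> t"
    then have "\<beta> \<le> F t" "t < z" by auto
    then obtain p where "p \<in> insert \<infinity> P" "p \<le> t" "F p = F t"
      using step \<beta> by (meson order.strict_trans2)
    moreover from \<open>p \<le> t\<close> \<open>t < z\<close> have "p < z" by simp
    ultimately show False using \<open>\<beta> \<le> F t\<close> below by auto
  qed
qed

lemma cdf_quantile_attained:
  assumes step: "\<And>t. 0 < F t \<Longrightarrow> \<exists>p\<in>insert \<infinity> P. p \<le> t \<and> F p = F t"
    and P: "finite P" "-\<infinity> \<notin> P" and \<beta>: "0 < \<beta>" "\<beta> \<le> F \<infinity>"
  shows "\<beta> \<le> F (cdf_quantile \<beta> F)"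
proof -
  define A where "A = {p \<in> insert \<infinity> P. \<beta> \<le> F p}"
  have A: "finite A" "\<infinity> \<in> A" using P \<beta> by (auto simp: A_def)
  then have min: "Min A \<in> A" by (intro Min_in) auto
  have "cdf_quantile \<beta> F = Min A"
  proof (rule antisym)
    show "cdf_quantile \<beta> F \<le> Min A"
      using min P by (intro cdf_quantile_le) (auto simp: A_def)
    show "Min A \<le> cdf_quantile \<beta> F"
      unfolding cdf_quantile_def
    proof (rule Inf_greatest)
      fix t assume "t \<in> {t. t \<noteq> -\<infinity> \<and> \<beta> \<le> F t}"
      then have "\<beta> \<le> F t" by simp
      then obtain p where "p \<in> insert \<infinity> P" "p \<le> t" "F p = F t"
        using step \<beta> by (meson order.strict_trans2)
      with \<open>\<beta> \<le> F t\<close> have "p \<in> A" by (simp add: A_def)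
      with A \<open>p \<le> t\<close> show "Min A \<le> t" by (meson Min_le order_trans)
    qed
  qed
  with min show ?thesis by (simp add: A_def)
qed

section \<open>The group-weighted threshold\<close>

text \<open>\<open>group_cdf (G k) c\<close> is the distribution function of the empirical score distribution
  of group \<open>k\<close>, with the paper's convention of a point mass at \<open>\<infinity>\<close> for an empty group.\<close>
definition group_cdf :: "nat set \<Rightarrow> (nat \<Rightarrow> real) \<Rightarrow> ereal \<Rightarrow> real" where
  "group_cdf A c t =
     (if A = {} then of_bool (t = \<infinity>) else card {i \<in> A. ereal (c i) \<le> t} / card A)"

lemma group_cdf_nonneg: "0 \<le> group_cdf A c t"
  by (simp add: group_cdf_def)

lemma group_cdf_infinity: "finite A \<Longrightarrow> group_cdf A c \<infinity> = 1"
  by (simp add: group_cdf_def)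

lemma group_cdf_cong: "(\<And>i. i \<in> A \<Longrightarrow> c i = c' i) \<Longrightarrow> group_cdf A c t = group_cdf A c' t"
  unfolding group_cdf_def by (metis (mono_tags, lifting) Collect_cong)

lemma group_cdf_eq_sum:
  "finite A \<Longrightarrow> A \<noteq> {} \<Longrightarrow> group_cdf A c t = (\<Sum>i\<in>A. of_bool (ereal (c i) \<le> t)) / card A"
  by (simp add: group_cdf_def of_bool_def sum.If_cases Int_def)

lemma group_cdf_eqI:
  assumes "{i \<in> A. ereal (c i) \<le> t} = {i \<in> A. ereal (c i) \<le> t'}" "t \<noteq> \<infinity>" "t' \<noteq> \<infinity>"
  shows "group_cdf A c t = group_cdf A c t'"
  unfolding group_cdf_def assms(1) using assms(2,3) by simp

lemma group_cdf_fun_upd_le: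
  assumes "finite A" "j \<in> A"
  shows "group_cdf A (c(j := w)) t \<le> group_cdf A c t + 1 / card A"
proof -
  have "card {i \<in> A. ereal ((c(j := w)) i) \<le> t} \<le> card (insert j {i \<in> A. ereal (c i) \<le> t})"
    using assms by (intro card_mono) auto
  also have "\<dots> \<le> card {i \<in> A. ereal (c i) \<le> t} + 1"
    using assms by (simp add: card_insert_if)
  finally have "card {i \<in> A. ereal ((c(j := w)) i) \<le> t} \<le> card {i \<in> A. ereal (c i) \<le> t} + 1" .
  then show ?thesis
    using assms by (auto simp: group_cdf_def divide_right_mono add_divide_distrib[symmetric])
qed

text \<open>Calibration points carry the indices \<open>1..n\<close>, \<open>G k\<close> collects those of group \<open>k\<close>, and
  the test point has index \<open>n + 1\<close>; of a score vector \<open>c :: nat \<Rightarrow> real\<close> only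
  \<open>c 1, \<dots>, c n\<close> enter the threshold.\<close>
locale gwcp_groups =
  fixes K :: nat and q :: "nat \<Rightarrow> real" and G :: "nat \<Rightarrow> nat set" and n :: nat
  assumes q_nonneg: "\<And>k. k \<in> {1..K} \<Longrightarrow> 0 \<le> q k"
    and q_sum: "(\<Sum>k\<in>{1..K}. q k) = 1"
    and G_subset: "\<And>k. k \<in> {1..K} \<Longrightarrow> G k \<subseteq> {1..n}"
    and G_disjoint: "\<And>k k'. k \<in> {1..K} \<Longrightarrow> k' \<in> {1..K} \<Longrightarrow> k \<noteq> k' \<Longrightarrow> G k \<inter> G k' = {}"
begin

definition mix_cdf :: "(nat \<Rightarrow> real) \<Rightarrow> ereal \<Rightarrow> real" where
  "mix_cdf c t = (\<Sum>k\<in>{1..K}. q k * group_cdf (G k) c t)"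

definition threshold :: "real \<Rightarrow> (nat \<Rightarrow> real) \<Rightarrow> ereal" where
  "threshold \<alpha> c = cdf_quantile (1 - \<alpha>) (mix_cdf c)"

lemma G_finite: "k \<in> {1..K} \<Longrightarrow> finite (G k)"
  using G_subset finite_subset by fastforce

lemma mix_cdf_infinity: "mix_cdf c \<infinity> = 1"
  unfolding mix_cdf_def using q_sum by (simp add: group_cdf_infinity G_finite)

lemma mix_cdf_cong:
  assumes "\<And>i. i \<in> {1..n} \<Longrightarrow> c i = c' i"
  shows "mix_cdf c = mix_cdf c'"
  unfolding mix_cdf_def
proof (intro ext sum.cong refl)
  fix t k assume "k \<in> {1..K}"
  then have "group_cdf (G k) c t = group_cdf (G k) c' t"
    using G_subset assms by (intro group_cdf_cong) blast
  then show "q k * group_cdf (G k) c t = q k * group_cdf (G k) c' t" by simp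
qed

lemma threshold_cong: "(\<And>i. i \<in> {1..n} \<Longrightarrow> c i = c' i) \<Longrightarrow> threshold \<alpha> c = threshold \<alpha> c'"
  unfolding threshold_def using mix_cdf_cong[of c c'] by simp

lemma mix_cdf_step:
  assumes "0 < mix_cdf c t"
  shows "\<exists>p\<in>insert \<infinity> ((\<lambda>i. ereal (c i)) ` {1..n}). p \<le> t \<and> mix_cdf c p = mix_cdf c t"
proof (cases "t = \<infinity>")
  case False
  let ?J = "{i \<in> {1..n}. ereal (c i) \<le> t}"
  have "?J \<noteq> {}"
  proof
    assume "?J = {}"
    have "group_cdf (G k) c t = 0" if "k \<in> {1..K}" for k
    proof -
      have none: "{i \<in> G k. ereal (c i) \<le> t} = {}" using G_subset[OF that] \<open>?J = {}\<close> by blast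
      show ?thesis unfolding group_cdf_def none using False by simp
    qed
    then have "mix_cdf c t = 0" by (simp add: mix_cdf_def)
    with assms show False by simp
  qed
  then have "Max (c ` ?J) \<in> c ` ?J" by (intro Max_in) auto
  then obtain j where j: "j \<in> ?J" "c j = Max (c ` ?J)" by auto
  have max: "c i \<le> c j" if "i \<in> ?J" for i
    unfolding j(2) using that by (intro Max_ge) auto
  have "{i \<in> G k. ereal (c i) \<le> ereal (c j)} = {i \<in> G k. ereal (c i) \<le> t}" if "k \<in> {1..K}" for k
  proof (intro Collect_cong conj_cong refl iffI)
    fix i assume "i \<in> G k"
    show "ereal (c i) \<le> t" if "ereal (c i) \<le> ereal (c j)"
      using that j(1) by (blast intro: order_trans)
    show "ereal (c i) \<le> ereal (c j)" if "ereal (c i) \<le> t"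
      using that max G_subset[OF \<open>k \<in> {1..K}\<close>] \<open>i \<in> G k\<close> by auto
  qed
  then have "mix_cdf c (ereal (c j)) = mix_cdf c t"
    unfolding mix_cdf_def using False by (intro sum.cong refl arg_cong2[where f = "(*)"] group_cdf_eqI) auto
  with j(1) show ?thesis by (intro bexI[where x = "ereal (c j)"]) auto
qed auto

lemma mix_cdf_fun_upd_le:
  assumes k: "k \<in> {1..K}" and j: "j \<in> G k"
  shows "mix_cdf (c(j := w)) t \<le> mix_cdf c t + q k / card (G k)"
proof -
  have other: "group_cdf (G k') (c(j := w)) t = group_cdf (G k') c t" if "k' \<in> {1..K} - {k}" for k'
    using G_disjoint[of k k'] that k j by (intro group_cdf_cong) auto
  have "q k * group_cdf (G k) (c(j := w)) t \<le> q k * (group_cdf (G k) c t + 1 / card (G k))"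
    using group_cdf_fun_upd_le[OF G_finite[OF k] j] q_nonneg[OF k] by (rule mult_left_mono)
  moreover have "mix_cdf c' t = q k * group_cdf (G k) c' t + (\<Sum>k'\<in>{1..K} - {k}. q k' * group_cdf (G k') c' t)"
    for c' unfolding mix_cdf_def using k by (simp add: sum.remove)
  ultimately show ?thesis using other by (simp add: distrib_left)
qed

lemma le_threshold_iff:
  assumes "\<alpha> < 1"
  shows "ereal z \<le> threshold \<alpha> c \<longleftrightarrow> (\<forall>j\<in>{1..n}. c j < z \<longrightarrow> mix_cdf c (ereal (c j)) < 1 - \<alpha>)"
proof -
  have "-\<infinity> \<notin> (\<lambda>i. ereal (c i)) ` {1..n}" by auto
  from le_cdf_quantile_iff[OF mix_cdf_step this, of "1 - \<alpha>" "ereal z"] assms show ?thesis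
    unfolding threshold_def by auto
qed

lemma mix_cdf_cdf_quantile_ge:
  assumes "0 < \<beta>" "\<beta> \<le> 1"
  shows "\<beta> \<le> mix_cdf c (cdf_quantile \<beta> (mix_cdf c))"
  using assms by (intro cdf_quantile_attained[OF mix_cdf_step]) (auto simp: mix_cdf_infinity)

lemma cdf_quantile_le_threshold:
  "0 \<le> m \<Longrightarrow> cdf_quantile (1 - \<alpha> - m) (mix_cdf c) \<le> threshold \<alpha> c"
  unfolding threshold_def by (intro cdf_quantile_mono) simp

lemma cdf_quantile_le_threshold_fun_upd:
  assumes "k \<in> {1..K}" "j \<in> G k" "q k / card (G k) \<le> m"
  shows "cdf_quantile (1 - \<alpha> - m) (mix_cdf c) \<le> threshold \<alpha> (c(j := w))"
  unfolding threshold_def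
proof (rule cdf_quantile_mono)
  fix t assume "1 - \<alpha> \<le> mix_cdf (c(j := w)) t"
  with mix_cdf_fun_upd_le[OF assms(1,2), of c w t] assms(3) show "1 - \<alpha> - m \<le> mix_cdf c t"
    by linarith
qed

lemma measurable_mix_cdf_at_score:
  assumes "\<And>i. i \<in> {1..n} \<Longrightarrow> (\<lambda>\<omega>. a \<omega> i) \<in> borel_measurable N" and "j \<in> {1..n}"
  shows "(\<lambda>\<omega>. mix_cdf (a \<omega>) (ereal (a \<omega> j))) \<in> borel_measurable N"
  unfolding mix_cdf_def
proof (intro borel_measurable_sum borel_measurable_times borel_measurable_const)
  fix k assume k: "k \<in> {1..K}"
  show "(\<lambda>\<omega>. group_cdf (G k) (a \<omega>) (ereal (a \<omega> j))) \<in> borel_measurable N"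
  proof (cases "G k = {}")
    case False
    have [measurable]: "(\<lambda>\<omega>. a \<omega> i) \<in> borel_measurable N" if "i \<in> G k" for i
      using assms(1) G_subset[OF k] that by blast
    note [measurable] = assms(1)[OF assms(2)]
    show ?thesis
      unfolding group_cdf_eq_sum[OF G_finite[OF k] False] by measurable
  qed (simp add: group_cdf_def)
qed

lemma pred_le_threshold:
  assumes "\<alpha> < 1" and "\<And>i. i \<in> {1..n} \<Longrightarrow> (\<lambda>\<omega>. a \<omega> i) \<in> borel_measurable N"
    and "b \<in> borel_measurable N"
  shows "Measurable.pred N (\<lambda>\<omega>. ereal (b \<omega>) \<le> threshold \<alpha> (a \<omega>))"
  unfolding le_threshold_iff[OF assms(1)]
proof (rule pred_intros_finite(3))
  fix j assume "j \<in> {1..n}"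
  note [measurable] = assms(2)[OF this] assms(3) measurable_mix_cdf_at_score[OF assms(2) this]
  show "Measurable.pred N (\<lambda>\<omega>. a \<omega> j < b \<omega> \<longrightarrow> mix_cdf (a \<omega>) (ereal (a \<omega> j)) < 1 - \<alpha>)"
    by measurable
qed simp

text \<open>\<open>q k\<close> times the coverage probability, given the calibration scores \<open>x\<close>, of a test point
  of group \<open>k\<close> whose score has law \<open>N\<close>; for a nonempty group that probability is written as the
  average over the members \<open>j\<close> of the group after exchanging the test score with \<open>x j\<close>.\<close>
definition exchanged_group_coverage :: "real \<Rightarrow> real measure \<Rightarrow> (nat \<Rightarrow> real) \<Rightarrow> nat \<Rightarrow> ennreal" where
  "exchanged_group_coverage \<alpha> N x k =
     (if G k = {} then ennreal (q k) * (\<integral>\<^sup>+y. of_bool (ereal y \<le> threshold \<alpha> x) \<partial>N)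
      else (\<Sum>j\<in>G k. ennreal (q k / card (G k)) *
              (\<integral>\<^sup>+y. of_bool (ereal (x j) \<le> threshold \<alpha> (x(j := y))) \<partial>N)))"

lemma exchanged_group_coverage_ge:
  assumes N: "prob_space N" and k: "k \<in> {1..K}"
    and m: "0 \<le> m" "G k \<noteq> {} \<Longrightarrow> q k / card (G k) \<le> m"
  shows "ennreal (q k * group_cdf (G k) x (cdf_quantile (1 - \<alpha> - m) (mix_cdf x))) \<le>
           exchanged_group_coverage \<alpha> N x k"
proof -
  define T where "T = cdf_quantile (1 - \<alpha> - m) (mix_cdf x)"
  have full: "(\<integral>\<^sup>+y. of_bool (P y) \<partial>N) = 1" if "\<And>y. P y" for P
    using prob_space.emeasure_space_1[OF N] that by simp
  show ?thesis
    unfolding T_def[symmetric]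
  proof (cases "G k = {}")
    case True
    have "threshold \<alpha> x = \<infinity>" if "T = \<infinity>"
      using cdf_quantile_le_threshold[OF m(1), of \<alpha> x] that by (simp add: T_def)
    then show "ennreal (q k * group_cdf (G k) x T) \<le> exchanged_group_coverage \<alpha> N x k"
      using True full by (auto simp: group_cdf_def exchanged_group_coverage_def)
  next
    case False
    have each: "ennreal (q k / card (G k) * of_bool (ereal (x j) \<le> T)) \<le>
        ennreal (q k / card (G k)) * (\<integral>\<^sup>+y. of_bool (ereal (x j) \<le> threshold \<alpha> (x(j := y))) \<partial>N)"
      if j: "j \<in> G k" for j
    proof (cases "ereal (x j) \<le> T")
      case True
      have "ereal (x j) \<le> threshold \<alpha> (x(j := y))" for y
        using True cdf_quantile_le_threshold_fun_upd[OF k j m(2)[OF False], of \<alpha> x y]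
        unfolding T_def by (rule order_trans)
      then show ?thesis using True full by simp
    qed simp
    have "q k * group_cdf (G k) x T = (\<Sum>j\<in>G k. q k / card (G k) * of_bool (ereal (x j) \<le> T))"
      unfolding group_cdf_eq_sum[OF G_finite[OF k] False] sum_distrib_left[symmetric]
      by (simp only: times_divide_eq_right times_divide_eq_left)
    also have "ennreal \<dots> = (\<Sum>j\<in>G k. ennreal (q k / card (G k) * of_bool (ereal (x j) \<le> T)))"
      using q_nonneg[OF k] by (intro sum_ennreal[symmetric]) simp
    also have "\<dots> \<le> exchanged_group_coverage \<alpha> N x k"
      unfolding exchanged_group_coverage_def if_not_P[OF False] by (rule sum_mono) (rule each)
    finally show "ennreal (q k * group_cdf (G k) x T) \<le> exchanged_group_coverage \<alpha> N x k" .
  qed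
qed

lemma sum_exchanged_group_coverage_ge:
  assumes R: "\<And>k. k \<in> {1..K} \<Longrightarrow> prob_space (R k)"
    and \<alpha>: "0 \<le> \<alpha>" and m: "0 \<le> m" "\<And>k. k \<in> {1..K} \<Longrightarrow> G k \<noteq> {} \<Longrightarrow> q k / card (G k) \<le> m"
  shows "ennreal (1 - \<alpha> - m) \<le> (\<Sum>k\<in>{1..K}. exchanged_group_coverage \<alpha> (R k) x k)"
proof (cases "1 - \<alpha> - m \<le> 0")
  case False
  define T where "T = cdf_quantile (1 - \<alpha> - m) (mix_cdf x)"
  have "1 - \<alpha> - m \<le> mix_cdf x T"
    unfolding T_def using False \<alpha> m(1) by (intro mix_cdf_cdf_quantile_ge) auto
  then have "ennreal (1 - \<alpha> - m) \<le> ennreal (\<Sum>k\<in>{1..K}. q k * group_cdf (G k) x T)"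
    by (simp add: mix_cdf_def ennreal_leI)
  also have "\<dots> = (\<Sum>k\<in>{1..K}. ennreal (q k * group_cdf (G k) x T))"
    using q_nonneg group_cdf_nonneg by (intro sum_ennreal[symmetric]) auto
  also have "\<dots> \<le> (\<Sum>k\<in>{1..K}. exchanged_group_coverage \<alpha> (R k) x k)"
    unfolding T_def using R m by (intro sum_mono exchanged_group_coverage_ge) auto
  finally show ?thesis .
qed (simp add: ennreal_neg)

lemma coverage_sets:
  assumes "\<alpha> < 1" "\<And>i. sets (E i) = sets borel"
  shows "{v \<in> space (PiM (insert (n + 1) {1..n}) E). ereal (v (n + 1)) \<le> threshold \<alpha> v}
           \<in> sets (PiM (insert (n + 1) {1..n}) E)"
proof -
  have "(\<lambda>v. v i) \<in> borel_measurable (PiM (insert (n + 1) {1..n}) E)" if "i \<in> insert (n + 1) {1..n}" for i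
    unfolding measurable_cong_sets[OF refl assms(2)[of i, symmetric]]
    by (rule measurable_component_singleton[OF that])
  then have "Measurable.pred (PiM (insert (n + 1) {1..n}) E) (\<lambda>v. ereal (v (n + 1)) \<le> threshold \<alpha> v)"
    by (intro pred_le_threshold[OF assms(1)]) auto
  then show ?thesis
    unfolding pred_def .
qed

lemma measurable_coverage_indicator:
  assumes "\<alpha> < 1" "\<And>i. sets (E i) = sets borel" "sets N = sets borel"
  shows "(\<lambda>(x, y). of_bool (ereal y \<le> threshold \<alpha> x) :: ennreal) \<in> borel_measurable (PiM {1..n} E \<Otimes>\<^sub>M N)"
proof -
  have "(\<lambda>p. fst p i) \<in> borel_measurable (PiM {1..n} E \<Otimes>\<^sub>M N)" if "i \<in> {1..n}" for i
    using measurable_component_singleton[OF that, of E] unfolding measurable_cong_sets[OF refl assms(2)]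
    by (rule measurable_compose[OF measurable_fst])
  moreover have "snd \<in> borel_measurable (PiM {1..n} E \<Otimes>\<^sub>M N)"
    using measurable_ident_sets[OF assms(3)] by (rule measurable_compose[OF measurable_snd])
  ultimately have [measurable]:
    "Measurable.pred (PiM {1..n} E \<Otimes>\<^sub>M N) (\<lambda>p. ereal (snd p) \<le> threshold \<alpha> (fst p))"
    by (rule pred_le_threshold[OF assms(1)])
  show ?thesis
    unfolding case_prod_beta by measurable
qed

lemma emeasure_coverage_PiM_insert:
  assumes E: "product_sigma_finite E" "\<And>i. sets (E i) = sets borel" and \<alpha>: "\<alpha> < 1"
  shows "emeasure (PiM (insert (n + 1) {1..n}) E)
           {v \<in> space (PiM (insert (n + 1) {1..n}) E). ereal (v (n + 1)) \<le> threshold \<alpha> v} =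
         (\<integral>\<^sup>+x. \<integral>\<^sup>+y. of_bool (ereal y \<le> threshold \<alpha> x) \<partial>E (n + 1) \<partial>PiM {1..n} E)"
    (is "emeasure ?P ?Cov = _")
proof -
  interpret product_sigma_finite E by (rule E(1))
  have Cov: "?Cov \<in> sets ?P"
    using \<alpha> E(2) by (rule coverage_sets)
  then have "emeasure ?P ?Cov = (\<integral>\<^sup>+v. indicator ?Cov v \<partial>?P)"
    by simp
  also have "\<dots> = (\<integral>\<^sup>+x. \<integral>\<^sup>+y. indicator ?Cov (x(n + 1 := y)) \<partial>E (n + 1) \<partial>PiM {1..n} E)"
    using Cov by (intro product_nn_integral_insert) auto
  also have "\<dots> = (\<integral>\<^sup>+x. \<integral>\<^sup>+y. of_bool (ereal y \<le> threshold \<alpha> x) \<partial>E (n + 1) \<partial>PiM {1..n} E)"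
  proof (intro nn_integral_cong)
    fix x y assume x: "x \<in> space (PiM {1..n} E)" and y: "y \<in> space (E (n + 1))"
    have "x(n + 1 := y) \<in> space ?P"
      using measurable_space[OF measurable_component_update[OF x] y] by simp
    moreover have "threshold \<alpha> (x(n + 1 := y)) = threshold \<alpha> x"
      by (rule threshold_cong) simp
    ultimately show "indicator ?Cov (x(n + 1 := y)) = (of_bool (ereal y \<le> threshold \<alpha> x) :: ennreal)"
      by (simp add: indicator_def)
  qed
  finally show ?thesis .
qed

end

section \<open>Exchangeability in finite products\<close>

lemma measurable_PiM_exchange:
  assumes "j \<in> J"
  shows "(\<lambda>p. ((fst p)(j := snd p), fst p j)) \<in> measurable (PiM J M \<Otimes>\<^sub>M M j) (PiM J M \<Otimes>\<^sub>M M j)"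
proof (rule measurable_Pair)
  show "(\<lambda>p. (fst p)(j := snd p)) \<in> measurable (PiM J M \<Otimes>\<^sub>M M j) (PiM J M)"
    using assms by (intro measurable_fun_upd[where J = J]) auto
  show "(\<lambda>p. fst p j) \<in> measurable (PiM J M \<Otimes>\<^sub>M M j) (M j)"
    using assms by measurable
qed

context product_sigma_finite
begin

lemma borel_measurable_nn_integral_exchange:
  assumes "j \<in> J" and h: "h \<in> borel_measurable (PiM J M \<Otimes>\<^sub>M M j)"
  shows "(\<lambda>x. \<integral>\<^sup>+y. h (x(j := y), x j) \<partial>M j) \<in> borel_measurable (PiM J M)"
  using measurable_compose[OF measurable_PiM_exchange[OF assms(1)] h]
  by (intro M.borel_measurable_nn_integral) (simp add: case_prod_beta)

text \<open>Exchanging coordinate \<open>j\<close> of a product with an independent copy of it does not change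
  the joint law.\<close>
lemma nn_integral_PiM_exchange:
  assumes J: "finite J" "j \<in> J"
    and h: "h \<in> borel_measurable (PiM J M \<Otimes>\<^sub>M M j)"
  shows "(\<integral>\<^sup>+x. \<integral>\<^sup>+y. h (x, y) \<partial>M j \<partial>PiM J M) = (\<integral>\<^sup>+x. \<integral>\<^sup>+y. h (x(j := y), x j) \<partial>M j \<partial>PiM J M)"
proof -
  define J' where "J' = J - {j}"
  have J': "J = insert j J'" "j \<notin> J'" "finite J'" using J by (auto simp: J'_def)
  have "(\<lambda>x. \<integral>\<^sup>+y. h (x, y) \<partial>M j) \<in> borel_measurable (PiM J M)"
    using h by (intro M.borel_measurable_nn_integral) (simp add: case_prod_beta)
  then have "(\<integral>\<^sup>+x. \<integral>\<^sup>+y. h (x, y) \<partial>M j \<partial>PiM J M) =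
      (\<integral>\<^sup>+x. \<integral>\<^sup>+u. \<integral>\<^sup>+y. h (x(j := u), y) \<partial>M j \<partial>M j \<partial>PiM J' M)"
    unfolding J' by (rule product_nn_integral_insert[OF J'(3,2)])
  also have "\<dots> = (\<integral>\<^sup>+x. \<integral>\<^sup>+u. \<integral>\<^sup>+y. h (x(j := y), u) \<partial>M j \<partial>M j \<partial>PiM J' M)"
  proof (rule nn_integral_cong)
    fix x assume "x \<in> space (PiM J' M)"
    then have "(\<lambda>u. x(j := u)) \<in> measurable (M j) (PiM J M)"
      unfolding J' using J'(2) by (rule measurable_component_update)
    then have hx: "(\<lambda>(u, y). h (x(j := u), y)) \<in> borel_measurable (M j \<Otimes>\<^sub>M M j)"
      using h by measurable
    show "(\<integral>\<^sup>+u. \<integral>\<^sup>+y. h (x(j := u), y) \<partial>M j \<partial>M j) = (\<integral>\<^sup>+u. \<integral>\<^sup>+y. h (x(j := y), u) \<partial>M j \<partial>M j)"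
      by (rule pair_sigma_finite.Fubini'[OF pair_sigma_finite.intro[OF sigma_finite_measures
            sigma_finite_measures] hx, symmetric])
  qed
  also have "\<dots> = (\<integral>\<^sup>+x. \<integral>\<^sup>+y. h (x(j := y), x j) \<partial>M j \<partial>PiM J M)"
    unfolding J' using product_nn_integral_insert[OF J'(3,2)
        borel_measurable_nn_integral_exchange[OF J(2) h, unfolded J']] by simp
  finally show ?thesis .
qed

lemma nn_integral_PiM_average_exchanges:
  assumes J: "finite J" and A: "finite A" "A \<noteq> {}" "A \<subseteq> J"
    and MA: "\<And>j. j \<in> A \<Longrightarrow> M j = N" and h: "h \<in> borel_measurable (PiM J M \<Otimes>\<^sub>M N)" and c: "0 \<le> c"
  shows "ennreal c * (\<integral>\<^sup>+x. \<integral>\<^sup>+y. h (x, y) \<partial>N \<partial>PiM J M) =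
           (\<integral>\<^sup>+x. (\<Sum>j\<in>A. ennreal (c / card A) * \<integral>\<^sup>+y. h (x(j := y), x j) \<partial>N) \<partial>PiM J M)"
proof -
  have exchange: "(\<integral>\<^sup>+x. \<integral>\<^sup>+y. h (x, y) \<partial>N \<partial>PiM J M) = (\<integral>\<^sup>+x. \<integral>\<^sup>+y. h (x(j := y), x j) \<partial>N \<partial>PiM J M)"
    and meas: "(\<lambda>x. \<integral>\<^sup>+y. h (x(j := y), x j) \<partial>N) \<in> borel_measurable (PiM J M)"
    if "j \<in> A" for j
    using nn_integral_PiM_exchange[OF J, of j h] borel_measurable_nn_integral_exchange[of j J h] h that A(3)
    unfolding MA[OF that] by auto
  have "ennreal c = (\<Sum>j\<in>A. ennreal (c / card A))"
    using A c by (subst sum_ennreal) auto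
  then have "ennreal c * (\<integral>\<^sup>+x. \<integral>\<^sup>+y. h (x, y) \<partial>N \<partial>PiM J M) =
      (\<Sum>j\<in>A. ennreal (c / card A) * \<integral>\<^sup>+x. \<integral>\<^sup>+y. h (x, y) \<partial>N \<partial>PiM J M)"
    by (simp only: sum_distrib_right)
  also have "\<dots> = (\<Sum>j\<in>A. \<integral>\<^sup>+x. ennreal (c / card A) * \<integral>\<^sup>+y. h (x(j := y), x j) \<partial>N \<partial>PiM J M)"
    using exchange meas by (intro sum.cong refl) (simp add: nn_integral_cmult)
  also have "\<dots> = (\<integral>\<^sup>+x. (\<Sum>j\<in>A. ennreal (c / card A) * \<integral>\<^sup>+y. h (x(j := y), x j) \<partial>N) \<partial>PiM J M)"
    using meas by (intro nn_integral_sum[symmetric]) auto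
  finally show ?thesis .
qed

end

context gwcp_groups
begin

lemma borel_measurable_exchanged_group_coverage:
  assumes E: "product_sigma_finite E" "\<And>i. sets (E i) = sets borel"
    and N: "prob_space N" "sets N = sets borel"
    and k: "k \<in> {1..K}" and calib: "\<And>j. j \<in> G k \<Longrightarrow> E j = N" and \<alpha>: "\<alpha> < 1"
  shows "(\<lambda>x. exchanged_group_coverage \<alpha> N x k) \<in> borel_measurable (PiM {1..n} E)"
proof -
  interpret product_sigma_finite E by (rule E(1))
  note h = measurable_coverage_indicator[OF \<alpha> E(2) N(2)]
  show ?thesis
  proof (cases "G k = {}")
    case True
    have "(\<lambda>x. \<integral>\<^sup>+y. of_bool (ereal y \<le> threshold \<alpha> x) \<partial>N) \<in> borel_measurable (PiM {1..n} E)"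
      using sigma_finite_measure.borel_measurable_nn_integral_fst[OF prob_space_imp_sigma_finite[OF N(1)] h]
      by simp
    then show ?thesis
      unfolding exchanged_group_coverage_def using True by (simp add: borel_measurable_times_ennreal)
  next
    case False
    have "(\<lambda>x. \<integral>\<^sup>+y. of_bool (ereal (x j) \<le> threshold \<alpha> (x(j := y))) \<partial>N) \<in> borel_measurable (PiM {1..n} E)"
      if "j \<in> G k" for j
      using borel_measurable_nn_integral_exchange[of j "{1..n}", OF _ h[folded calib[OF that]]]
        G_subset[OF k] that calib[OF that] by auto
    then show ?thesis
      unfolding exchanged_group_coverage_def using False
      by (simp add: borel_measurable_sum borel_measurable_times_ennreal)
  qed
qed

lemma nn_integral_exchanged_group_coverage:
  assumes E: "product_sigma_finite E" "\<And>i. sets (E i) = sets borel"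
    and N: "prob_space N" "sets N = sets borel"
    and k: "k \<in> {1..K}" and calib: "\<And>j. j \<in> G k \<Longrightarrow> E j = N" and \<alpha>: "\<alpha> < 1"
  shows "ennreal (q k) * (\<integral>\<^sup>+x. \<integral>\<^sup>+y. of_bool (ereal y \<le> threshold \<alpha> x) \<partial>N \<partial>PiM {1..n} E) =
           (\<integral>\<^sup>+x. exchanged_group_coverage \<alpha> N x k \<partial>PiM {1..n} E)"
proof (cases "G k = {}")
  case True
  have "(\<lambda>x. \<integral>\<^sup>+y. of_bool (ereal y \<le> threshold \<alpha> x) \<partial>N) \<in> borel_measurable (PiM {1..n} E)"
    using sigma_finite_measure.borel_measurable_nn_integral_fst[OF prob_space_imp_sigma_finite[OF N(1)]
        measurable_coverage_indicator[OF \<alpha> E(2) N(2)]] by simp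
  then show ?thesis
    unfolding exchanged_group_coverage_def using True by (simp add: nn_integral_cmult)
next
  case False
  show ?thesis
    unfolding exchanged_group_coverage_def if_not_P[OF False]
    using product_sigma_finite.nn_integral_PiM_average_exchanges[OF E(1) finite_atLeastAtMost
        G_finite[OF k] False G_subset[OF k] calib measurable_coverage_indicator[OF \<alpha> E(2) N(2)]
        q_nonneg[OF k]]
    by simp
qed

end

section \<open>Coverage for independent scores\<close>

lemma emeasure_eq_weighted_sum:
  assumes "prob_space N" "\<And>k. k \<in> S \<Longrightarrow> prob_space (R k)" "\<And>k. k \<in> S \<Longrightarrow> 0 \<le> q k"
    and "measure N B = (\<Sum>k\<in>S. q k * measure (R k) B)"
  shows "emeasure N B = (\<Sum>k\<in>S. ennreal (q k) * emeasure (R k) B)"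
proof -
  interpret N: prob_space N by fact
  have "emeasure N B = ennreal (\<Sum>k\<in>S. q k * measure (R k) B)"
    using assms(4) by (simp add: N.emeasure_eq_measure)
  also have "\<dots> = (\<Sum>k\<in>S. ennreal (q k * measure (R k) B))"
    using assms(3) by (intro sum_ennreal[symmetric]) simp
  also have "\<dots> = (\<Sum>k\<in>S. ennreal (q k) * emeasure (R k) B)"
  proof (intro sum.cong refl)
    fix k assume k: "k \<in> S"
    interpret R: prob_space "R k" by (rule assms(2)[OF k])
    show "ennreal (q k * measure (R k) B) = ennreal (q k) * emeasure (R k) B"
      using assms(3)[OF k] by (simp add: ennreal_mult R.emeasure_eq_measure)
  qed
  finally show ?thesis .
qed

lemma (in prob_space) prob_indep_vars_eq_PiM:
  assumes indep: "indep_vars M' X I" and "I \<noteq> {}" and A: "A \<in> sets (PiM I M')"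
  shows "prob {\<omega> \<in> space M. (\<lambda>i\<in>I. X i \<omega>) \<in> A} = measure (PiM I (\<lambda>i. distr M (M' i) (X i))) A"
proof -
  have X: "X i \<in> measurable M (M' i)" if "i \<in> I" for i
    using indep that unfolding indep_vars_def by auto
  then have "(\<lambda>\<omega>. \<lambda>i\<in>I. X i \<omega>) \<in> measurable M (PiM I M')"
    by (intro measurable_restrict) auto
  moreover have "distr M (PiM I M') (\<lambda>\<omega>. \<lambda>i\<in>I. X i \<omega>) = PiM I (\<lambda>i. distr M (M' i) (X i))"
    using indep_vars_iff_distr_eq_PiM'[where I = I and M' = M' and X = X] assms X by simp
  ultimately show ?thesis
    using measure_distr[of "\<lambda>\<omega>. \<lambda>i\<in>I. X i \<omega>" M "PiM I M'" A] A by (simp add: vimage_def Int_def conj_commute)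
qed

context gwcp_groups
begin

lemma nn_integral_coverage_exchange:
  fixes E R :: "nat \<Rightarrow> real measure"
  assumes E: "product_sigma_finite E" "\<And>i. sets (E i) = sets borel"
    and R: "\<And>k. k \<in> {1..K} \<Longrightarrow> prob_space (R k)" "\<And>k. k \<in> {1..K} \<Longrightarrow> sets (R k) = sets borel"
    and calib: "\<And>k j. k \<in> {1..K} \<Longrightarrow> j \<in> G k \<Longrightarrow> E j = R k"
    and test: "\<And>B. B \<in> sets borel \<Longrightarrow>
                 emeasure (E (n + 1)) B = (\<Sum>k\<in>{1..K}. ennreal (q k) * emeasure (R k) B)"
    and \<alpha>: "\<alpha> < 1"
  shows "(\<integral>\<^sup>+x. \<integral>\<^sup>+y. of_bool (ereal y \<le> threshold \<alpha> x) \<partial>E (n + 1) \<partial>PiM {1..n} E) =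
           (\<integral>\<^sup>+x. (\<Sum>k\<in>{1..K}. exchanged_group_coverage \<alpha> (R k) x k) \<partial>PiM {1..n} E)"
proof -
  have test_x: "(\<integral>\<^sup>+y. of_bool (ereal y \<le> threshold \<alpha> x) \<partial>E (n + 1)) =
      (\<Sum>k\<in>{1..K}. ennreal (q k) * \<integral>\<^sup>+y. of_bool (ereal y \<le> threshold \<alpha> x) \<partial>R k)" for x
  proof -
    have "Measurable.pred borel (\<lambda>y. ereal y \<le> threshold \<alpha> x)"
      by (rule pred_le_threshold[OF \<alpha>]) auto
    then have S: "{y. ereal y \<le> threshold \<alpha> x} \<in> sets borel"
      unfolding pred_def by simp
    have "(of_bool (ereal y \<le> threshold \<alpha> x) :: ennreal) = indicator {y. ereal y \<le> threshold \<alpha> x} y" for y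
      by (simp add: indicator_def)
    then show ?thesis
      using S test[OF S] E(2) R(2) by simp
  qed
  have int_meas: "(\<lambda>x. \<integral>\<^sup>+y. of_bool (ereal y \<le> threshold \<alpha> x) \<partial>R k) \<in> borel_measurable (PiM {1..n} E)"
    if "k \<in> {1..K}" for k
    using sigma_finite_measure.borel_measurable_nn_integral_fst[OF prob_space_imp_sigma_finite[OF R(1)[OF that]]
        measurable_coverage_indicator[OF \<alpha> E(2) R(2)[OF that]]] by simp
  have "(\<integral>\<^sup>+x. \<integral>\<^sup>+y. of_bool (ereal y \<le> threshold \<alpha> x) \<partial>E (n + 1) \<partial>PiM {1..n} E) =
      (\<Sum>k\<in>{1..K}. ennreal (q k) * \<integral>\<^sup>+x. \<integral>\<^sup>+y. of_bool (ereal y \<le> threshold \<alpha> x) \<partial>R k \<partial>PiM {1..n} E)"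
    unfolding test_x using int_meas
    by (subst nn_integral_sum) (auto intro!: sum.cong nn_integral_cmult borel_measurable_times_ennreal)
  also have "\<dots> = (\<Sum>k\<in>{1..K}. \<integral>\<^sup>+x. exchanged_group_coverage \<alpha> (R k) x k \<partial>PiM {1..n} E)"
    using E R calib \<alpha> by (intro sum.cong refl nn_integral_exchanged_group_coverage) auto
  also have "\<dots> = (\<integral>\<^sup>+x. (\<Sum>k\<in>{1..K}. exchanged_group_coverage \<alpha> (R k) x k) \<partial>PiM {1..n} E)"
    using E R calib \<alpha> by (intro nn_integral_sum[symmetric] borel_measurable_exchanged_group_coverage) auto
  finally show ?thesis .
qed

lemma coverage_product_measure:
  fixes E R :: "nat \<Rightarrow> real measure"
  assumes E: "\<And>i. prob_space (E i)" "\<And>i. sets (E i) = sets borel"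
    and R: "\<And>k. k \<in> {1..K} \<Longrightarrow> prob_space (R k)" "\<And>k. k \<in> {1..K} \<Longrightarrow> sets (R k) = sets borel"
    and calib: "\<And>k j. k \<in> {1..K} \<Longrightarrow> j \<in> G k \<Longrightarrow> E j = R k"
    and test: "\<And>B. B \<in> sets borel \<Longrightarrow>
                 emeasure (E (n + 1)) B = (\<Sum>k\<in>{1..K}. ennreal (q k) * emeasure (R k) B)"
    and \<alpha>: "0 \<le> \<alpha>" "\<alpha> < 1"
    and m: "0 \<le> m" "\<And>k. k \<in> {1..K} \<Longrightarrow> G k \<noteq> {} \<Longrightarrow> q k / card (G k) \<le> m"
  shows "ennreal (1 - \<alpha> - m) \<le> emeasure (PiM (insert (n + 1) {1..n}) E)
           {v \<in> space (PiM (insert (n + 1) {1..n}) E). ereal (v (n + 1)) \<le> threshold \<alpha> v}"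
proof -
  have E_sf: "product_sigma_finite E"
    using E(1) by (simp add: product_sigma_finite_def prob_space_imp_sigma_finite)
  interpret C: prob_space "PiM {1..n} E"
    using E(1) by (intro prob_space_PiM) auto
  have "ennreal (1 - \<alpha> - m) = (\<integral>\<^sup>+x. ennreal (1 - \<alpha> - m) \<partial>PiM {1..n} E)"
    using C.emeasure_space_1 by simp
  also have "\<dots> \<le> (\<integral>\<^sup>+x. (\<Sum>k\<in>{1..K}. exchanged_group_coverage \<alpha> (R k) x k) \<partial>PiM {1..n} E)"
    by (intro nn_integral_mono sum_exchanged_group_coverage_ge[OF R(1) \<alpha>(1) m])
  also have "\<dots> = emeasure (PiM (insert (n + 1) {1..n}) E)
      {v \<in> space (PiM (insert (n + 1) {1..n}) E). ereal (v (n + 1)) \<le> threshold \<alpha> v}"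
    using emeasure_coverage_PiM_insert[OF E_sf E(2) \<alpha>(2)]
      nn_integral_coverage_exchange[OF E_sf E(2) R calib test \<alpha>(2)] by simp
  finally show ?thesis .
qed

lemma coverage_independent_scores:
  fixes M :: "'w measure" and Z :: "nat \<Rightarrow> 'w \<Rightarrow> real" and R :: "nat \<Rightarrow> real measure"
  assumes M: "prob_space M"
    and indep: "prob_space.indep_vars M (\<lambda>_. borel) Z {1..n + 1}"
    and R: "\<And>k. k \<in> {1..K} \<Longrightarrow> prob_space (R k)" "\<And>k. k \<in> {1..K} \<Longrightarrow> sets (R k) = sets borel"
    and calib: "\<And>k j. k \<in> {1..K} \<Longrightarrow> j \<in> G k \<Longrightarrow> distr M borel (Z j) = R k"
    and test: "\<And>B. B \<in> sets borel \<Longrightarrow>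
                 measure M {\<omega> \<in> space M. Z (n + 1) \<omega> \<in> B} = (\<Sum>k\<in>{1..K}. q k * measure (R k) B)"
    and \<alpha>: "0 \<le> \<alpha>" "\<alpha> < 1"
    and m: "0 \<le> m" "\<And>k. k \<in> {1..K} \<Longrightarrow> G k \<noteq> {} \<Longrightarrow> q k / card (G k) \<le> m"
  shows "1 - \<alpha> - m \<le> measure M {\<omega> \<in> space M. ereal (Z (n + 1) \<omega>) \<le> threshold \<alpha> (\<lambda>i. Z i \<omega>)}"
proof -
  interpret M: prob_space M by (rule M)
  define I where "I = insert (n + 1) {1..n}"
  have indep_I: "M.indep_vars (\<lambda>_. borel) Z I"
    using indep by (simp add: I_def atLeastAtMostSuc_conv)
  have Z_meas: "Z i \<in> borel_measurable M" if "i \<in> I" for i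
    using indep_I that unfolding M.indep_vars_def by auto
  define E where "E i = (if i \<in> I then distr M borel (Z i) else return borel 0)" for i
  have E: "prob_space (E i)" "sets (E i) = sets borel" for i
    unfolding E_def using M.prob_space_distr[OF Z_meas] by (auto simp: prob_space_return)
  interpret E: prob_space "PiM I E"
    using E(1) by (intro prob_space_PiM) auto
  have E_calib: "E j = R k" if "k \<in> {1..K}" "j \<in> G k" for k j
    using calib[OF that] G_subset[OF that(1)] that(2) by (auto simp: E_def I_def)
  have E_test: "emeasure (E (n + 1)) B = (\<Sum>k\<in>{1..K}. ennreal (q k) * emeasure (R k) B)"
    if B: "B \<in> sets borel" for B
  proof (rule emeasure_eq_weighted_sum[OF E(1) R(1) q_nonneg])
    show "measure (E (n + 1)) B = (\<Sum>k\<in>{1..K}. q k * measure (R k) B)"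
      using test[OF B] B Z_meas[of "n + 1"]
      by (simp add: E_def I_def measure_distr vimage_def Int_def conj_commute)
  qed
  define Cov where "Cov = {v \<in> space (PiM I E). ereal (v (n + 1)) \<le> threshold \<alpha> v}"
  have "ennreal (1 - \<alpha> - m) \<le> emeasure (PiM I E) Cov"
    unfolding Cov_def I_def by (rule coverage_product_measure[where E = E and R = R, OF E R E_calib E_test \<alpha> m])
  then have "1 - \<alpha> - m \<le> measure (PiM I E) Cov"
    by (cases "0 \<le> 1 - \<alpha> - m") (auto simp: E.emeasure_eq_measure ennreal_le_iff)
  also have "measure (PiM I E) Cov = M.prob {\<omega> \<in> space M. (\<lambda>i\<in>I. Z i \<omega>) \<in> Cov}"
  proof -
    have "sets (PiM I E) = sets (PiM I (\<lambda>_. borel))"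
      using E(2) by (intro sets_PiM_cong) auto
    then have "Cov \<in> sets (PiM I (\<lambda>_. borel))"
      using coverage_sets[where E = E, OF \<alpha>(2) E(2)] unfolding Cov_def I_def by simp
    moreover have "PiM I (\<lambda>i. distr M borel (Z i)) = PiM I E"
      by (rule PiM_cong) (simp_all add: E_def)
    ultimately show ?thesis
      using M.prob_indep_vars_eq_PiM[OF indep_I] by (simp add: I_def)
  qed
  also have "{\<omega> \<in> space M. (\<lambda>i\<in>I. Z i \<omega>) \<in> Cov} =
      {\<omega> \<in> space M. ereal (Z (n + 1) \<omega>) \<le> threshold \<alpha> (\<lambda>i. Z i \<omega>)}"
  proof -
    have "(\<lambda>i\<in>I. Z i \<omega>) \<in> space (PiM I E)" if "\<omega> \<in> space M" for \<omega>
      using measurable_space[OF Z_meas that] E(2) sets_eq_imp_space_eq[OF E(2)]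
      by (auto simp: space_PiM)
    moreover have "threshold \<alpha> (\<lambda>i\<in>I. Z i \<omega>) = threshold \<alpha> (\<lambda>i. Z i \<omega>)" for \<omega>
      by (rule threshold_cong) (simp add: I_def)
    ultimately show ?thesis
      by (auto simp: Cov_def I_def)
  qed
  finally show ?thesis .
qed

end

section \<open>From calibration data to scores\<close>

lemma (in prob_space) prob_label_mixture:
  fixes L :: "'a \<Rightarrow> nat" and V :: "'a \<Rightarrow> 'v" and g :: "nat \<Rightarrow> 'v \<Rightarrow> real"
  assumes LV: "(\<lambda>\<omega>. (L \<omega>, V \<omega>)) \<in> measurable M (count_space UNIV \<Otimes>\<^sub>M N)"
    and g: "(\<lambda>(k, v). g k v) \<in> borel_measurable (count_space UNIV \<Otimes>\<^sub>M N)"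
    and S: "finite S" "(\<Sum>k\<in>S. q k) = 1"
    and P: "\<And>k. k \<in> S \<Longrightarrow> prob_space (P k)" "\<And>k. k \<in> S \<Longrightarrow> sets (P k) = sets N"
    and joint: "\<And>k A. k \<in> S \<Longrightarrow> A \<in> sets N \<Longrightarrow>
                  prob {\<omega> \<in> space M. L \<omega> = k \<and> V \<omega> \<in> A} = q k * measure (P k) A"
    and B: "B \<in> sets borel"
  shows "prob {\<omega> \<in> space M. g (L \<omega>) (V \<omega>) \<in> B} = (\<Sum>k\<in>S. q k * measure (distr (P k) borel (g k)) B)"
proof -
  have [measurable]: "L \<in> measurable M (count_space UNIV)" "V \<in> measurable M N"
    using measurable_compose[OF LV measurable_fst] measurable_compose[OF LV measurable_snd] by simp_all
  have gk [measurable]: "g k \<in> borel_measurable N" for k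
    using measurable_compose[OF measurable_Pair1' g, of k] by simp
  define W where "W k = {\<omega> \<in> space M. L \<omega> = k \<and> V \<omega> \<in> g k -` B \<inter> space N}" for k
  have W_sets: "W k \<in> events" for k
    unfolding W_def using B by measurable
  have "prob {\<omega> \<in> space M. L \<omega> \<in> S} = (\<Sum>k\<in>S. prob {\<omega> \<in> space M. L \<omega> = k \<and> V \<omega> \<in> space N})"
    using S(1) by (subst finite_measure_finite_Union[symmetric])
      (auto simp: disjoint_family_on_def intro!: arg_cong[where f = prob] measurable_space[of V M N])
  also have "\<dots> = (\<Sum>k\<in>S. q k)"
  proof (rule sum.cong[OF refl])
    fix k assume k: "k \<in> S"
    have "space (P k) = space N" by (rule sets_eq_imp_space_eq[OF P(2)[OF k]])
    then show "prob {\<omega> \<in> space M. L \<omega> = k \<and> V \<omega> \<in> space N} = q k"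
      using joint[OF k sets.top] prob_space.prob_space[OF P(1)[OF k]] by simp
  qed
  finally have "prob {\<omega> \<in> space M. L \<omega> \<in> S} = 1"
    using S(2) by simp
  moreover have "{\<omega> \<in> space M. L \<omega> \<in> S} \<in> events"
    by measurable
  ultimately have "AE \<omega> in M. L \<omega> \<in> S"
    by (simp add: prob_Collect_eq_1)
  with AE_space have "AE \<omega> in M. \<omega> \<in> {\<omega> \<in> space M. g (L \<omega>) (V \<omega>) \<in> B} \<longleftrightarrow> \<omega> \<in> (\<Union>k\<in>S. W k)"
    by eventually_elim (auto simp: W_def intro: measurable_space[of V M N])
  then have "prob {\<omega> \<in> space M. g (L \<omega>) (V \<omega>) \<in> B} = prob (\<Union>k\<in>S. W k)"
    using B W_sets S(1) by (intro finite_measure_eq_AE) auto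
  also have "\<dots> = (\<Sum>k\<in>S. prob (W k))"
    using W_sets S(1) by (intro finite_measure_finite_Union) (auto simp: disjoint_family_on_def W_def)
  also have "\<dots> = (\<Sum>k\<in>S. q k * measure (distr (P k) borel (g k)) B)"
  proof (rule sum.cong[OF refl])
    fix k assume k: "k \<in> S"
    have "g k -` B \<inter> space N \<in> sets N"
      using gk B by (rule measurable_sets)
    then have "prob (W k) = q k * measure (P k) (g k -` B \<inter> space N)"
      unfolding W_def by (rule joint[OF k])
    also have "measure (P k) (g k -` B \<inter> space N) = measure (distr (P k) borel (g k)) B"
      using measure_distr[of "g k" "P k" borel B] gk B
      by (simp add: measurable_cong_sets[OF P(2)[OF k] refl] sets_eq_imp_space_eq[OF P(2)[OF k]])
    finally show "prob (W k) = q k * measure (distr (P k) borel (g k)) B" .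
  qed
  finally show ?thesis .
qed

lemma (in prob_space) distr_fixed_label:
  assumes "\<And>\<omega>. \<omega> \<in> space M \<Longrightarrow> L \<omega> = k" and V: "V \<in> measurable M N"
    and g: "(\<lambda>(k, v). g k v) \<in> borel_measurable (count_space UNIV \<Otimes>\<^sub>M N)"
  shows "distr M borel (\<lambda>\<omega>. g (L \<omega>) (V \<omega>)) = distr (distr M N V) borel (g k)"
proof -
  have "distr M borel (\<lambda>\<omega>. g (L \<omega>) (V \<omega>)) = distr M borel (\<lambda>\<omega>. g k (V \<omega>))"
    using assms(1) by (intro distr_cong) auto
  also have "\<dots> = distr (distr M N V) borel (g k)"
    using measurable_compose[OF measurable_Pair1' g, of k] distr_distr[OF _ V, of "g k" borel]
    by (simp add: comp_def)
  finally show ?thesis .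
qed

lemma prob_emp_score_atMost:
  assumes "distinct xs"
  shows "measure_pmf.prob (emp_score (map (\<lambda>i. ereal (c i)) xs)) {..t} = group_cdf (set xs) c t"
proof (cases "xs = []")
  case False
  have "mset (map (\<lambda>i. ereal (c i)) xs) = image_mset (\<lambda>i. ereal (c i)) (mset_set (set xs))"
    using assms by (simp add: mset_set_set)
  then have "emp_score (map (\<lambda>i. ereal (c i)) xs) = map_pmf (\<lambda>i. ereal (c i)) (pmf_of_set (set xs))"
    using False by (simp add: emp_score_def map_pmf_of_set)
  then show ?thesis
    using False by (simp add: group_cdf_def measure_pmf_of_set Int_def)
qed (auto simp: emp_score_def group_cdf_def indicator_def)

lemma group_scores_map:
  "group_scores s (map (\<lambda>i. (a i, b i, d i)) xs) k =
     map (\<lambda>i. ereal (s (a i, b i) (d i))) (filter (\<lambda>i. a i = k) xs)"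
  by (induction xs) (simp_all add: group_scores_def)

lemma (in gwcp_groups) gwcp_qhat_eq_threshold:
  assumes "\<And>k i. k \<in> {1..K} \<Longrightarrow> i \<in> {1..n} \<Longrightarrow> a i = k \<longleftrightarrow> i \<in> G k"
  shows "gwcp_qhat s K q \<alpha> (map (\<lambda>i. (a i, b i, d i)) [1..<n + 1]) =
           threshold \<alpha> (\<lambda>i. s (a i, b i) (d i))"
proof -
  have "set (filter (\<lambda>i. a i = k) [1..<n + 1]) = G k" if "k \<in> {1..K}" for k
  proof -
    have "set (filter (\<lambda>i. a i = k) [1..<n + 1]) = {i \<in> {1..n}. a i = k}"
      by auto
    also have "\<dots> = G k"
      using assms[OF that] G_subset[OF that] by blast
    finally show ?thesis .
  qed
  then show ?thesis
    unfolding gwcp_qhat_def quantile_eq_cdf_quantile threshold_def mix_cdf_def group_scores_map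
    by (simp add: prob_emp_score_atMost)
qed

definition block :: "(nat \<Rightarrow> nat) \<Rightarrow> nat \<Rightarrow> nat set" where
  "block nn k = {(\<Sum>j\<in>{1..<k}. nn j)<..(\<Sum>j\<in>{1..k}. nn j)}"

lemma card_block: "1 \<le> k \<Longrightarrow> card (block nn k) = nn k"
  unfolding block_def by (simp add: atLeastLessThanSuc_atLeastAtMost[symmetric] sum.atLeastLessThan_Suc)

lemma block_disjoint: "k \<noteq> k' \<Longrightarrow> block nn k \<inter> block nn k' = {}"
proof -
  have "block nn k \<inter> block nn k' = {}" if "k < k'" for k k'
  proof -
    have "(\<Sum>j\<in>{1..k}. nn j) \<le> (\<Sum>j\<in>{1..<k'}. nn j)"
      using that by (intro sum_mono2) auto
    then show ?thesis unfolding block_def by auto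
  qed
  then show "k \<noteq> k' \<Longrightarrow> block nn k \<inter> block nn k' = {}"
    by (metis Int_commute linorder_neqE_nat)
qed

lemma UN_block: "(\<Union>k\<in>{1..K}. block nn k) = {1..\<Sum>k\<in>{1..K}. nn k}"
proof (induction K)
  case (Suc K)
  have "{1..Suc K} = insert (Suc K) {1..K}" by auto
  then show ?case
    using Suc by (auto simp: block_def atLeastLessThanSuc_atLeastAtMost)
qed (simp add: block_def)

lemma gwcp_groups_block:
  assumes "\<And>k. k \<in> {1..K} \<Longrightarrow> 0 \<le> q k" "(\<Sum>k\<in>{1..K}. q k) = 1"
  shows "gwcp_groups K q (block nn) (\<Sum>k\<in>{1..K}. nn k)"
  using assms block_disjoint UN_block[where K = K and nn = nn] by unfold_locales auto

lemma block_label_iff: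
  assumes "\<And>k i. k \<in> {1..K} \<Longrightarrow> i \<in> block nn k \<Longrightarrow> a i = k"
    and "k \<in> {1..K}" "i \<in> {1..\<Sum>k\<in>{1..K}. nn k}"
  shows "a i = k \<longleftrightarrow> i \<in> block nn k"
proof -
  obtain k' where "k' \<in> {1..K}" "i \<in> block nn k'"
    using assms(3) unfolding UN_block[symmetric] by blast
  then show ?thesis
    using assms(1,2) block_disjoint[of k k' nn] by auto
qed

lemma Max_ratios_ge:
  fixes q :: "nat \<Rightarrow> real"
  shows "0 \<le> Max (insert 0 {q k / real (nn k) | k. k \<in> {1..K} \<and> nn k > 0})"
    and "k \<in> {1..K} \<Longrightarrow> block nn k \<noteq> {} \<Longrightarrow>
           q k / card (block nn k) \<le> Max (insert 0 {q k / real (nn k) | k. k \<in> {1..K} \<and> nn k > 0})"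
proof -
  have fin: "finite {q k / real (nn k) | k. k \<in> {1..K} \<and> nn k > 0}"
    by (rule finite_subset[of _ "(\<lambda>k. q k / real (nn k)) ` {1..K}"]) auto
  then show "0 \<le> Max (insert 0 {q k / real (nn k) | k. k \<in> {1..K} \<and> nn k > 0})"
    by (intro Max_ge) auto
  assume "k \<in> {1..K}" "block nn k \<noteq> {}"
  moreover have "finite (block nn k)"
    by (simp add: block_def)
  ultimately show "q k / card (block nn k) \<le> Max (insert 0 {q k / real (nn k) | k. k \<in> {1..K} \<and> nn k > 0})"
    using fin card_block[of k nn] by (intro Max_ge) auto
qed

theorem theorem1:
  fixes M :: "'w measure"
    and SX :: "'x measure" and SY :: "'y measure"
    and Pk :: "nat \<Rightarrow> ('x \<times> 'y) measure"
    and K :: nat and q :: "nat \<Rightarrow> real" and \<alpha> :: real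
    and nn :: "nat \<Rightarrow> nat" and n :: nat
    and X0 :: "nat \<Rightarrow> 'w \<Rightarrow> nat" and X1 :: "nat \<Rightarrow> 'w \<Rightarrow> 'x" and Y :: "nat \<Rightarrow> 'w \<Rightarrow> 'y"
    and s :: "nat \<times> 'x \<Rightarrow> 'y \<Rightarrow> real"
  assumes K: "K \<ge> 1"
    and Pi_prob: "\<And>k. k \<in> {1..K} \<Longrightarrow> prob_space (Pk k)"
    and Pi_sets: "\<And>k. k \<in> {1..K} \<Longrightarrow> sets (Pk k) = sets (SX \<Otimes>\<^sub>M SY)"
    and q_nonneg: "\<And>k. k \<in> {1..K} \<Longrightarrow> q k \<ge> 0"
    and q_sum: "(\<Sum>k\<in>{1..K}. q k) = 1"
    and alpha: "0 < \<alpha>" "\<alpha> < 1"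
    and n_def: "n = (\<Sum>k\<in>{1..K}. nn k)"
    and M: "prob_space M"
    and calib: "\<And>k i. k \<in> {1..K} \<Longrightarrow> (\<Sum>j\<in>{1..<k}. nn j) < i \<Longrightarrow> i \<le> (\<Sum>j\<in>{1..k}. nn j) \<Longrightarrow>
                 (\<forall>\<omega>\<in>space M. X0 i \<omega> = k) \<and>
                 distr M (SX \<Otimes>\<^sub>M SY) (\<lambda>\<omega>. (X1 i \<omega>, Y i \<omega>)) = Pk k"
    and test: "\<And>k A. k \<in> {1..K} \<Longrightarrow> A \<in> sets (SX \<Otimes>\<^sub>M SY) \<Longrightarrow>
                 measure M {\<omega> \<in> space M. X0 (n+1) \<omega> = k \<and> (X1 (n+1) \<omega>, Y (n+1) \<omega>) \<in> A}
                   = q k * measure (Pk k) A"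
    and indep: "prob_space.indep_vars M (\<lambda>i. count_space UNIV \<Otimes>\<^sub>M (SX \<Otimes>\<^sub>M SY))
                  (\<lambda>i \<omega>. (X0 i \<omega>, (X1 i \<omega>, Y i \<omega>))) {1..n+1}"
    and s_meas: "(\<lambda>(k, x, y). s (k, x) y) \<in> borel_measurable (count_space UNIV \<Otimes>\<^sub>M (SX \<Otimes>\<^sub>M SY))"
  shows "measure M {\<omega> \<in> space M.
            Y (n+1) \<omega> \<in> gwcp_set s K q \<alpha> (map (\<lambda>i. (X0 i \<omega>, X1 i \<omega>, Y i \<omega>)) [1..<n+1])
                           (X0 (n+1) \<omega>, X1 (n+1) \<omega>)}
         \<ge> 1 - \<alpha> - Max (insert 0 {q k / real (nn k) | k. k \<in> {1..K} \<and> nn k > 0})"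
proof -
  interpret M: prob_space M by (rule M)
  interpret gwcp_groups K q "block nn" n
    unfolding n_def using q_nonneg q_sum by (rule gwcp_groups_block)
  have calib_block: "(\<forall>\<omega>\<in>space M. X0 i \<omega> = k) \<and> distr M (SX \<Otimes>\<^sub>M SY) (\<lambda>\<omega>. (X1 i \<omega>, Y i \<omega>)) = Pk k"
    if "k \<in> {1..K}" "i \<in> block nn k" for k i
    using calib[OF that(1)] that(2) by (simp add: block_def)
  define g where "g k = (\<lambda>(x, y). s (k, x) y)" for k
  have g: "(\<lambda>(k, v). g k v) \<in> borel_measurable (count_space UNIV \<Otimes>\<^sub>M (SX \<Otimes>\<^sub>M SY))"
    unfolding g_def by (rule s_meas)
  define Z where "Z = (\<lambda>i \<omega>. g (X0 i \<omega>) (X1 i \<omega>, Y i \<omega>))"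
  define R where "R k = distr (Pk k) borel (g k)" for k
  define m where "m = Max (insert 0 {q k / real (nn k) | k. k \<in> {1..K} \<and> nn k > 0})"
  have V_meas: "(\<lambda>\<omega>. (X0 i \<omega>, X1 i \<omega>, Y i \<omega>)) \<in> measurable M (count_space UNIV \<Otimes>\<^sub>M (SX \<Otimes>\<^sub>M SY))"
    if "i \<in> {1..n + 1}" for i
    using indep that unfolding M.indep_vars_def by auto
  have "1 - \<alpha> - m \<le> measure M {\<omega> \<in> space M. ereal (Z (n + 1) \<omega>) \<le> threshold \<alpha> (\<lambda>i. Z i \<omega>)}"
  proof (rule coverage_independent_scores[OF M])
    show "M.indep_vars (\<lambda>_. borel) Z {1..n + 1}"
      using M.indep_vars_compose2[OF indep g] by (simp add: Z_def)
    show "prob_space (R k)" if "k \<in> {1..K}" for k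
      unfolding R_def using measurable_compose[OF measurable_Pair1' g, of k] Pi_sets[OF that]
      by (intro prob_space.prob_space_distr[OF Pi_prob[OF that]]) (simp cong: measurable_cong_sets)
    show "sets (R k) = sets borel" for k
      by (simp add: R_def)
    show "distr M borel (Z j) = R k" if "k \<in> {1..K}" "j \<in> block nn k" for k j
    proof -
      have "j \<in> {1..n + 1}" using G_subset[OF that(1)] that(2) by auto
      then have "(\<lambda>\<omega>. (X1 j \<omega>, Y j \<omega>)) \<in> measurable M (SX \<Otimes>\<^sub>M SY)"
        using measurable_compose[OF V_meas measurable_snd] by simp
      then show ?thesis
        using M.distr_fixed_label[of "X0 j" k _ _ g] calib_block[OF that] g unfolding Z_def R_def by auto
    qed
    show "measure M {\<omega> \<in> space M. Z (n + 1) \<omega> \<in> B} = (\<Sum>k\<in>{1..K}. q k * measure (R k) B)"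
      if "B \<in> sets borel" for B
      unfolding Z_def R_def
      using M.prob_label_mixture[where L = "X0 (n + 1)" and V = "\<lambda>\<omega>. (X1 (n + 1) \<omega>, Y (n + 1) \<omega>)"
          and N = "SX \<Otimes>\<^sub>M SY" and g = g and S = "{1..K}" and q = q and P = Pk and B = B]
        V_meas[of "n + 1"] g q_sum Pi_prob Pi_sets test that by simp
    show "0 \<le> \<alpha>" "\<alpha> < 1"
      using alpha by simp_all
    show "0 \<le> m"
      unfolding m_def by (rule Max_ratios_ge)
    show "q k / card (block nn k) \<le> m" if "k \<in> {1..K}" "block nn k \<noteq> {}" for k
      unfolding m_def using that by (rule Max_ratios_ge)
  qed
  moreover have "{\<omega> \<in> space M. Y (n+1) \<omega> \<in> gwcp_set s K q \<alpha> (map (\<lambda>i. (X0 i \<omega>, X1 i \<omega>, Y i \<omega>)) [1..<n+1])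
                  (X0 (n+1) \<omega>, X1 (n+1) \<omega>)} =
      {\<omega> \<in> space M. ereal (Z (n + 1) \<omega>) \<le> threshold \<alpha> (\<lambda>i. Z i \<omega>)}"
  proof -
    have "gwcp_qhat s K q \<alpha> (map (\<lambda>i. (X0 i \<omega>, X1 i \<omega>, Y i \<omega>)) [1..<n + 1]) = threshold \<alpha> (\<lambda>i. Z i \<omega>)"
      if "\<omega> \<in> space M" for \<omega>
      unfolding Z_def g_def prod.case using calib_block that n_def
      by (intro gwcp_qhat_eq_threshold block_label_iff[of K nn "\<lambda>i. X0 i \<omega>"]) auto
    then show ?thesis
      by (auto simp: gwcp_set_def Z_def g_def simp del: upt_Suc)
  qed
  ultimately show ?thesis
    by (simp add: m_def)
qed

end
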